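(* Let $b,\ell\ge1$, $s=2^b$, and let $G'$ be obtained from $G_{b,\ell}$ by deleting an arbitrary subset $R$ of the vertices $\{v_{\ell,\vec j}:\vec j\in[0,s-1]^\ell\}$ together with their incident edges. Let $\vec x,\vec z\in[0,s-1]^\ell$ with $z_k-x_k$ even for all $k$. Then whether $v_{\ell,(\vec x+\vec z)/2}\in R$ is determined by $\vec x$, $\vec z$ and the (possibly infinite) length of a shortest path between $v_{0,\vec x}$ and $v_{2\ell,\vec z}$ in $G'$; namely $v_{\ell,(\vec x+\vec z)/2}\notin R$ iff this distance equals $\mathrm{dist}_{G_{b,\ell}}(v_{0,\vec x},v_{2\ell,\vec z})$.
   Context: Notation $[a,b]=\{a,\dots,b\}$. Fix integers $b,\ell\ge1$, $s=2^b$, $A=3\ell s^2$. The weighted graph $H_{b,\ell}$ has vertex set $\bigcup_{i=0}^{2\ell}V_i$, $V_i=\{v_{i,\vec j}:\vec j\in[0,s-1]^\ell\}$; for $i\in[0,2\ell-1]$ let $c(i)=i+1$ if $i<\ell$, $c(i)=2\ell-i$ if $i\ge\ell$; $v_{i,\vec j}$ and $v_{i+1,\vec j'}$ are adjacent iff $j_k=j'_k$ for all $k\ne c(i)$, with weight $A+(j_{c(i)}-j'_{c(i)})^2$; no other edges. The unweighted graph $G_{b,\ell}$: each $v\in V_i$ is kept and gets attached (root adjacent to $v$) a complete binary tree $T^{\mathrm{in}}_v$ of depth $b$ (only if $i>0$) with leaves $v^{\mathrm{in}}_u$ for the neighbors $u\in V_{i-1}$, and a complete binary tree $T^{\mathrm{out}}_v$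 of depth $b$ (only if $i<2\ell$) with leaves $v^{\mathrm{out}}_u$ for the neighbors $u\in V_{i+1}$; all trees disjoint; for every edge $e=\{u,v\}$ of $H_{b,\ell}$, $u\in V_i$, $v\in V_{i+1}$, the leaves $u^{\mathrm{out}}_v$ and $v^{\mathrm{in}}_u$ are joined by a path of length $w(e)-2b-2$ through new vertices. *)

theory Defs
  imports Main "HOL-Library.Extended_Nat"
begin

text \<open>Vertices of G_{b,l}:
  Main i j      = v_{i,j}
  Tin i j t     = node of the tree T^in_{v_{i,j}} at address t (root = [], leaves = length b)
  Tout i j t    = node of the tree T^out_{v_{i,j}}
  Mid i j j' k  = k-th internal vertex of the subdivided path for the H-edge {v_{i,j}, v_{i+1,j'}}\<close>

datatype vtx = Main nat "nat list" | Tin nat "nat list" "bool list"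
  | Tout nat "nat list" "bool list" | Mid nat "nat list" "nat list" nat

definition vecok :: "nat \<Rightarrow> nat \<Rightarrow> nat list \<Rightarrow> bool" where
  "vecok l s j \<longleftrightarrow> length j = l \<and> (\<forall>k<l. j ! k < s)"

text \<open>c(i), 1-based coordinate index\<close>
definition cidx :: "nat \<Rightarrow> nat \<Rightarrow> nat" where
  "cidx l i = (if i < l then i + 1 else 2 * l - i)"

definition Hadj :: "nat \<Rightarrow> nat \<Rightarrow> nat \<Rightarrow> nat list \<Rightarrow> nat list \<Rightarrow> bool" where
  "Hadj b l i j j' \<longleftrightarrow> i < 2 * l \<and> vecok l (2 ^ b) j \<and> vecok l (2 ^ b) j'
     \<and> (\<forall>k<l. k \<noteq> cidx l i - 1 \<longrightarrow> j ! k = j' ! k)"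

definition Hwt :: "nat \<Rightarrow> nat \<Rightarrow> nat \<Rightarrow> nat list \<Rightarrow> nat list \<Rightarrow> nat" where
  "Hwt b l i j j' = nat (int (3 * l * (2 ^ b) ^ 2)
      + (int (j ! (cidx l i - 1)) - int (j' ! (cidx l i - 1))) ^ 2)"

definition plen :: "nat \<Rightarrow> nat \<Rightarrow> nat \<Rightarrow> nat list \<Rightarrow> nat list \<Rightarrow> nat" where
  "plen b l i j j' = Hwt b l i j j' - 2 * b - 2"

text \<open>fin i j y: address of the leaf of T^in_{v_{i,j}} for the neighbour of v_{i,j} in V_{i-1}
  whose c(i-1)-th coordinate is y; fout analogously for T^out and V_{i+1} (coordinate c(i)).\<close>
definition pnode :: "nat \<Rightarrow> nat \<Rightarrow> (nat \<Rightarrow> nat list \<Rightarrow> nat \<Rightarrow> bool list)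
    \<Rightarrow> (nat \<Rightarrow> nat list \<Rightarrow> nat \<Rightarrow> bool list) \<Rightarrow> nat \<Rightarrow> nat list \<Rightarrow> nat list \<Rightarrow> nat \<Rightarrow> vtx" where
  "pnode b l fin fout i j j' k =
     (if k = 0 then Tout i j (fout i j (j' ! (cidx l i - 1)))
      else if k = plen b l i j j' then Tin (Suc i) j' (fin (Suc i) j' (j ! (cidx l i - 1)))
      else Mid i j j' k)"

definition dedge :: "nat \<Rightarrow> nat \<Rightarrow> (nat \<Rightarrow> nat list \<Rightarrow> nat \<Rightarrow> bool list)
    \<Rightarrow> (nat \<Rightarrow> nat list \<Rightarrow> nat \<Rightarrow> bool list) \<Rightarrow> vtx \<Rightarrow> vtx \<Rightarrow> bool" where
  "dedge b l fin fout u v \<longleftrightarrow>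
     (\<exists>i j. 0 < i \<and> i \<le> 2 * l \<and> vecok l (2 ^ b) j \<and> u = Main i j \<and> v = Tin i j [])
   \<or> (\<exists>i j. i < 2 * l \<and> vecok l (2 ^ b) j \<and> u = Main i j \<and> v = Tout i j [])
   \<or> (\<exists>i j t x. 0 < i \<and> i \<le> 2 * l \<and> vecok l (2 ^ b) j \<and> length t < b
        \<and> u = Tin i j t \<and> v = Tin i j (t @ [x]))
   \<or> (\<exists>i j t x. i < 2 * l \<and> vecok l (2 ^ b) j \<and> length t < b
        \<and> u = Tout i j t \<and> v = Tout i j (t @ [x]))
   \<or> (\<exists>i j j' k. Hadj b l i j j' \<and> k < plen b l i j j'
        \<and> u = pnode b l fin fout i j j' k \<and> v = pnode b l fin fout i j j' (Suc k))"

definition Gedge :: "nat \<Rightarrow> nat \<Rightarrow> (nat \<Rightarrow> nat list \<Rightarrow> nat \<Rightarrow> bool list)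
    \<Rightarrow> (nat \<Rightarrow> nat list \<Rightarrow> nat \<Rightarrow> bool list) \<Rightarrow> vtx \<Rightarrow> vtx \<Rightarrow> bool" where
  "Gedge b l fin fout u v \<longleftrightarrow> dedge b l fin fout u v \<or> dedge b l fin fout v u"

definition Gdel :: "nat \<Rightarrow> nat \<Rightarrow> (nat \<Rightarrow> nat list \<Rightarrow> nat \<Rightarrow> bool list)
    \<Rightarrow> (nat \<Rightarrow> nat list \<Rightarrow> nat \<Rightarrow> bool list) \<Rightarrow> nat list set \<Rightarrow> vtx \<Rightarrow> vtx \<Rightarrow> bool" where
  "Gdel b l fin fout R u v \<longleftrightarrow> Gedge b l fin fout u v
     \<and> u \<notin> Main l ` R \<and> v \<notin> Main l ` R"

definition walk :: "('a \<Rightarrow> 'a \<Rightarrow> bool) \<Rightarrow> 'a list \<Rightarrow> bool" where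
  "walk E xs \<longleftrightarrow> xs \<noteq> [] \<and> (\<forall>k. Suc k < length xs \<longrightarrow> E (xs ! k) (xs ! Suc k))"

definition gdist :: "('a \<Rightarrow> 'a \<Rightarrow> bool) \<Rightarrow> 'a \<Rightarrow> 'a \<Rightarrow> enat" where
  "gdist E a c = (INF xs \<in> {xs. walk E xs \<and> hd xs = a \<and> last xs = c}. enat (length xs - 1))"

end

theory Submission
  imports Defs
begin

text \<open>Write y = (x + z)/2 and D = 2lA + |x - y|^2 + |y - z|^2. Moving the coordinates of x one
  per layer to those of y and then, in reverse order, to those of z gives a path of length D
  through v_{l,y} that avoids all other vertices of the middle layer.
  Conversely, every walk from v_{0,x} to v_{2l,z} passes some v_{l,j}. Two potentials that change
  by at most one along each edge of G, one measuring progress from x and one from z, show that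
  the walk has at least l A + |j - x|^2 edges before v_{l,j} and at least l A + |j - z|^2 after it.
  Since 2y = x + z, the sum is D + 2 |j - y|^2, so every walk avoiding v_{l,y} is longer than D.
  The constant A is large enough to pay for the detours through the binary trees.\<close>

inductive path :: "('a \<Rightarrow> 'a \<Rightarrow> bool) \<Rightarrow> 'a \<Rightarrow> 'a \<Rightarrow> nat \<Rightarrow> bool" for E where
  path_nil: "path E u u 0"
| path_cons: "E u v \<Longrightarrow> path E v w n \<Longrightarrow> path E u w (Suc n)"

lemma path_edge: "E u v \<Longrightarrow> path E u v 1"
  using path_cons[OF _ path_nil] by fastforce

lemma path_trans: "path E u v m \<Longrightarrow> path E v w n \<Longrightarrow> path E u w (m + n)"
  by (induction rule: path.induct) (auto intro: path.intros)

lemma path_sum: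
  assumes "\<And>t. t < n \<Longrightarrow> path E (f t) (f (Suc t)) (w t)"
  shows "path E (f 0) (f n) (\<Sum>t<n. w t)"
  using assms
proof (induction n)
  case 0
  show ?case by (simp add: path_nil)
next
  case (Suc n)
  then show ?case using path_trans[of E "f 0" "f n"] by simp
qed

lemma walk_Cons_Cons: "walk E (x # y # xs) \<longleftrightarrow> E x y \<and> walk E (y # xs)"
  by (auto simp: walk_def nth_Cons split: nat.splits)

lemma path_imp_walk: "path E u v n \<Longrightarrow> \<exists>xs. walk E xs \<and> hd xs = u \<and> last xs = v \<and> length xs = Suc n"
proof (induction rule: path.induct)
  case (path_nil u)
  show ?case by (intro exI[of _ "[u]"]) (simp add: walk_def)
next
  case (path_cons u v w n)
  then obtain xs where xs: "walk E xs" "hd xs = v" "last xs = w" "length xs = Suc n"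
    by blast
  then have "walk E (u # xs)"
    using path_cons(1) by (cases xs) (auto simp: walk_Cons_Cons)
  with xs show ?case by (intro exI[of _ "u # xs"]) auto
qed

lemma gdist_le_path: "path E u v n \<Longrightarrow> gdist E u v \<le> enat n"
  unfolding gdist_def by (drule path_imp_walk) (auto intro!: INF_lower2)

lemma le_gdistI:
  assumes "\<And>xs. walk E xs \<Longrightarrow> hd xs = u \<Longrightarrow> last xs = v \<Longrightarrow> n \<le> length xs - 1"
  shows "enat n \<le> gdist E u v"
  unfolding gdist_def using assms by (auto intro!: INF_greatest)

lemma walk_mono: "walk E xs \<Longrightarrow> (\<And>u v. E u v \<Longrightarrow> E' u v) \<Longrightarrow> walk E' xs"
  unfolding walk_def by blast

lemma walk_lipschitz:
  fixes \<phi> :: "'a \<Rightarrow> int"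
  assumes w: "walk E xs" and lip: "\<And>u v. E u v \<Longrightarrow> \<bar>\<phi> u - \<phi> v\<bar> \<le> 1"
    and pq: "p \<le> q" "q < length xs"
  shows "\<bar>\<phi> (xs ! q) - \<phi> (xs ! p)\<bar> \<le> int (q - p)"
  using pq
proof (induction q)
  case 0
  then show ?case by simp
next
  case (Suc q)
  show ?case
  proof (cases "p = Suc q")
    case False
    with Suc have "p \<le> q" and ih: "\<bar>\<phi> (xs ! q) - \<phi> (xs ! p)\<bar> \<le> int (q - p)"
      by simp_all
    have "\<bar>\<phi> (xs ! q) - \<phi> (xs ! Suc q)\<bar> \<le> 1"
      using w Suc.prems lip unfolding walk_def by blast
    with ih \<open>p \<le> q\<close> show ?thesis by linarith
  qed simp
qed

lemma walk_exits:
  assumes w: "walk E xs" and "P (hd xs)" "\<not> P (last xs)"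
  shows "\<exists>k. Suc k < length xs \<and> P (xs ! k) \<and> \<not> P (xs ! Suc k)"
proof (rule ccontr)
  assume stays: "\<not> ?thesis"
  have ne: "xs \<noteq> []" using w by (simp add: walk_def)
  have "P (xs ! k)" if "k < length xs" for k
    using that by (induction k) (use assms ne stays in \<open>auto simp: hd_conv_nth\<close>)
  then show False using assms ne by (simp add: last_conv_nth)
qed

lemma walk_vertex_on_edge:
  assumes w: "walk E xs" and "2 \<le> length xs" "k < length xs"
  shows "\<exists>v. E (xs ! k) v \<or> E v (xs ! k)"
proof (cases "Suc k < length xs")
  case True
  then show ?thesis using w unfolding walk_def by blast
next
  case False
  with assms have "Suc (k - 1) < length xs" "Suc (k - 1) = k" by auto
  then show ?thesis using w unfolding walk_def by metis
qed

lemma two_mult_add_two_le_pow2_square: "1 \<le> b \<Longrightarrow> 2 * b + 2 \<le> ((2::nat) ^ b) ^ 2"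
proof (induction b rule: nat_induct_at_least)
  case (Suc n)
  have "((2::nat) ^ Suc n) ^ 2 = 4 * (2 ^ n) ^ 2" by (simp add: power_mult_distrib)
  with Suc show ?case by simp
qed simp

lemma diff_square_le:
  assumes "p < s" "q < s"
  shows "(int p - int q)^2 \<le> (int s - 1)^2"
proof -
  have "\<bar>int p - int q\<bar> \<le> int s - 1" using assms by linarith
  then have "\<bar>int p - int q\<bar>^2 \<le> (int s - 1)^2" by (rule power_mono) simp
  then show ?thesis by simp
qed

lemma square_dist_midpoint:
  fixes x y z j :: "'a::comm_ring_1"
  assumes "2 * y = x + z"
  shows "(j - x)^2 + (j - z)^2 = (x - y)^2 + (y - z)^2 + 2 * (j - y)^2"
proof -
  have x: "x = 2 * y - z" using assms by (simp add: eq_diff_eq)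
  show ?thesis unfolding x by (simp add: power2_eq_square algebra_simps)
qed

lemma vecok_nth: "vecok l s j \<Longrightarrow> k < l \<Longrightarrow> j ! k < s"
  by (simp add: vecok_def)

lemma cidx_less: "i < 2 * l \<Longrightarrow> cidx l i - 1 < l"
  by (auto simp: cidx_def)

lemma HadjD:
  assumes "Hadj b l i j j'"
  shows "i < 2 * l" "vecok l (2 ^ b) j" "vecok l (2 ^ b) j'" "cidx l i - 1 < l"
    "\<And>k. k < l \<Longrightarrow> k \<noteq> cidx l i - 1 \<Longrightarrow> j ! k = j' ! k"
  using assms cidx_less by (auto simp: Hadj_def)

lemma Gdel_empty: "Gdel b l fin fout {} = Gedge b l fin fout"
  by (intro ext) (simp add: Gdel_def)

text \<open>A potential F on the vertices of H, extended to G: it rises by one per step down an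
  out-tree and falls by one per step down an in-tree; on a subdivided edge it is the smaller of
  the values propagated from the two ends.\<close>
definition vtx_pot :: "nat \<Rightarrow> nat \<Rightarrow> (nat \<Rightarrow> nat list \<Rightarrow> int) \<Rightarrow> vtx \<Rightarrow> int" where
  "vtx_pot b l F v = (case v of
       Main i j \<Rightarrow> F i j
     | Tin i j t \<Rightarrow> F i j - 1 - int (length t)
     | Tout i j t \<Rightarrow> F i j + 1 + int (length t)
     | Mid i j j' k \<Rightarrow> min (F i j + int b + 1 + int k)
          (F (Suc i) j' - int b - 1 + int (plen b l i j j') - int k))"

locale Gbl =
  fixes b l :: nat and fin fout :: "nat \<Rightarrow> nat list \<Rightarrow> nat \<Rightarrow> bool list"
  assumes b_ge1: "1 \<le> b" and l_ge1: "1 \<le> l"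
    and fin_bij: "\<And>i j. 0 < i \<Longrightarrow> i \<le> 2 * l \<Longrightarrow> vecok l (2 ^ b) j \<Longrightarrow>
           bij_betw (fin i j) {..<2 ^ b} {t. length t = b}"
    and fout_bij: "\<And>i j. i < 2 * l \<Longrightarrow> vecok l (2 ^ b) j \<Longrightarrow>
           bij_betw (fout i j) {..<2 ^ b} {t. length t = b}"
begin

abbreviation "G \<equiv> Gedge b l fin fout"
abbreviation "G_del R \<equiv> Gdel b l fin fout R"

definition A :: int where "A = int (3 * l * (2 ^ b)^2)"

lemma Hwt_eq: "int (Hwt b l i j j') = A + (int (j ! (cidx l i - 1)) - int (j' ! (cidx l i - 1)))^2"
  by (simp add: Hwt_def A_def)

lemma Hwt_gt: "2 * b + 2 < Hwt b l i j j'"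
proof -
  have "(2 ^ b)^2 \<le> l * ((2::nat) ^ b)^2" "0 < ((2::nat) ^ b)^2" using l_ge1 by simp_all
  then have "2 * b + 2 < 3 * l * (2 ^ b)^2"
    using two_mult_add_two_le_pow2_square[OF b_ge1] by linarith
  moreover have "int (3 * l * (2 ^ b)^2) \<le> int (Hwt b l i j j')"
    using Hwt_eq[of i j j'] by (simp add: A_def)
  ultimately show ?thesis by linarith
qed

lemma pot_constants:
  "(int (2 ^ b) - 1)^2 \<le> int ((2 ^ b)^2)"
  "int ((2 ^ b)^2) + (4 * int b + 4) \<le> 2 * A"
  "(int (2 ^ b) - 1)^2 + (4 * int b + 4) \<le> A"
proof -
  let ?S = "int (2 ^ b)"
  have S: "int ((2 ^ b)^2) = ?S^2" by simp
  have "(?S - 1)^2 \<le> ?S^2" by (intro power_mono) auto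
  moreover have "int (2 * b + 2) \<le> int ((2 ^ b)^2)"
    using two_mult_add_two_le_pow2_square[OF b_ge1] by (simp only: of_nat_le_iff)
  then have "2 * int b + 2 \<le> ?S^2" by simp
  moreover have "?S^2 \<le> int l * ?S^2" using l_ge1 by simp
  moreover have "A = 3 * (int l * ?S^2)" by (simp add: A_def)
  ultimately show "(?S - 1)^2 \<le> int ((2 ^ b)^2)" "int ((2 ^ b)^2) + (4 * int b + 4) \<le> 2 * A"
    "(?S - 1)^2 + (4 * int b + 4) \<le> A"
    unfolding S by linarith+
qed

lemma int_plen: "int (plen b l i j j') = int (Hwt b l i j j') - 2 * int b - 2"
  using Hwt_gt[of i j j'] by (simp add: plen_def of_nat_diff)

lemma Hadj_leaf_length:
  assumes "Hadj b l i j j'"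
  shows "length (fout i j (j' ! (cidx l i - 1))) = b"
    and "length (fin (Suc i) j' (j ! (cidx l i - 1))) = b"
proof -
  note H = HadjD[OF assms]
  show "length (fout i j (j' ! (cidx l i - 1))) = b"
    using bij_betwE[OF fout_bij[OF H(1,2)]] vecok_nth[OF H(3,4)] by simp
  show "length (fin (Suc i) j' (j ! (cidx l i - 1))) = b"
    using bij_betwE[OF fin_bij[of "Suc i" j']] H vecok_nth[OF H(2,4)] by simp
qed

lemma vtx_pot_pnode:
  assumes H: "Hadj b l i j j'" and k: "k \<le> plen b l i j j'"
    and F: "F (Suc i) j' - F i j \<le> int (Hwt b l i j j')"
      "F i j - F (Suc i) j' \<le> int (Hwt b l i j j') - 4 * int b - 4"
  shows "vtx_pot b l F (pnode b l fin fout i j j' k)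
           = min (F i j + int b + 1 + int k) (F (Suc i) j' - int b - 1 + int (plen b l i j j') - int k)"
  using Hadj_leaf_length[OF H] F k int_plen[of i j j'] Hwt_gt[of i j j']
  by (auto simp: pnode_def vtx_pot_def)

text \<open>The hypotheses on F make the minimum in vtx_pot agree with the tree values at both ends
  of every subdivided edge.\<close>
lemma vtx_pot_lipschitz:
  assumes F: "\<And>i j j'. Hadj b l i j j' \<Longrightarrow> F (Suc i) j' - F i j \<le> int (Hwt b l i j j')
                 \<and> F i j - F (Suc i) j' \<le> int (Hwt b l i j j') - 4 * int b - 4"
    and e: "G u v"
  shows "\<bar>vtx_pot b l F u - vtx_pot b l F v\<bar> \<le> 1"
proof -
  have "\<bar>vtx_pot b l F u - vtx_pot b l F v\<bar> \<le> 1" if "dedge b l fin fout u v" for u v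
    using that unfolding dedge_def
  proof (elim disjE exE conjE)
    fix i j j' k
    assume H: "Hadj b l i j j'" and "k < plen b l i j j'"
      and "u = pnode b l fin fout i j j' k" "v = pnode b l fin fout i j j' (Suc k)"
    then show ?thesis
      using vtx_pot_pnode[OF H _ conjunct1[OF F[OF H]] conjunct2[OF F[OF H]]]
      by (simp add: min_def)
  qed (auto simp: vtx_pot_def)
  then show ?thesis
    using e unfolding Gedge_def by (metis abs_minus_commute)
qed

lemma path_Tout:
  "i < 2 * l \<Longrightarrow> vecok l (2 ^ b) j \<Longrightarrow> length t \<le> b \<Longrightarrow>
   path (G_del R) (Tout i j []) (Tout i j t) (length t)"
proof (induction t rule: rev_induct)
  case (snoc a t)
  then have "G_del R (Tout i j t) (Tout i j (t @ [a]))"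
    by (auto simp: Gdel_def Gedge_def dedge_def)
  with snoc show ?case using path_trans[OF _ path_edge] by fastforce
qed (simp add: path_nil)

lemma path_Tin:
  "0 < i \<Longrightarrow> i \<le> 2 * l \<Longrightarrow> vecok l (2 ^ b) j \<Longrightarrow> length t \<le> b \<Longrightarrow>
   path (G_del R) (Tin i j t) (Tin i j []) (length t)"
proof (induction t rule: rev_induct)
  case (snoc a t)
  then have "G_del R (Tin i j (t @ [a])) (Tin i j t)"
    by (auto simp: Gdel_def Gedge_def dedge_def)
  with snoc show ?case using path_trans[OF path_edge] by fastforce
qed (simp add: path_nil)

lemma path_Hadj:
  assumes H: "Hadj b l i j j'"
    and "Main i j \<notin> Main l ` R" "Main (Suc i) j' \<notin> Main l ` R"
  shows "path (G_del R) (Main i j) (Main (Suc i) j') (Hwt b l i j j')"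
proof -
  note H' = HadjD[OF H]
  let ?P = "plen b l i j j'" and ?p = "pnode b l fin fout i j j'"
  have "G_del R (?p k) (?p (Suc k))" if "k < ?P" for k
  proof -
    have "dedge b l fin fout (?p k) (?p (Suc k))"
      using H that unfolding dedge_def by blast
    then show ?thesis by (auto simp: Gdel_def Gedge_def pnode_def)
  qed
  then have "path (G_del R) (?p 0) (?p ?P) (\<Sum>t<?P. 1)"
    by (intro path_sum path_edge)
  then have mid: "path (G_del R) (?p 0) (?p ?P) ?P" by simp
  have "G_del R (Main i j) (Tout i j [])"
    using assms(2) H' by (auto simp: Gdel_def Gedge_def dedge_def)
  moreover have "path (G_del R) (Tout i j []) (?p 0) b"
    using path_Tout[OF H'(1,2), of "fout i j (j' ! (cidx l i - 1))" R] Hadj_leaf_length(1)[OF H]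
    by (simp add: pnode_def)
  ultimately have out: "path (G_del R) (Main i j) (?p 0) (Suc b)"
    by (rule path_cons)
  have "path (G_del R) (?p ?P) (Tin (Suc i) j' []) b"
    using path_Tin[of "Suc i" j' "fin (Suc i) j' (j ! (cidx l i - 1))" R]
      Hadj_leaf_length(2)[OF H] H' Hwt_gt[of i j j']
    by (simp add: pnode_def plen_def)
  moreover have "G_del R (Tin (Suc i) j' []) (Main (Suc i) j')"
    using assms(3) H' by (auto simp: Gdel_def Gedge_def dedge_def)
  ultimately have inn: "path (G_del R) (?p ?P) (Main (Suc i) j') (Suc b)"
    using path_trans[OF _ path_edge] by fastforce
  have "Hwt b l i j j' = Suc b + ?P + Suc b"
    using Hwt_gt[of i j j'] by (simp add: plen_def)
  then show ?thesis using path_trans[OF path_trans[OF out mid] inn] by simp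
qed

end

text \<open>Potential of the H-vertex in layer t with coordinate vector j, seen from the vector a
  in layer 0: the first t coordinates have been paid for as weights A + (j_k - a_k)^2, every
  other coordinate still differing from a is charged B.\<close>
definition layer_pot :: "nat \<Rightarrow> int \<Rightarrow> int \<Rightarrow> nat list \<Rightarrow> nat \<Rightarrow> nat list \<Rightarrow> int" where
  "layer_pot l A B a t j = int (min t l) * A + (\<Sum>k<l.
      if k < min t l then (int (j ! k) - int (a ! k))^2 else if j ! k = a ! k then 0 else B)"

lemma layer_pot_Suc_diff:
  assumes c: "c < l" and ct: "t < l \<Longrightarrow> c = t" and eq: "\<And>k. k < l \<Longrightarrow> k \<noteq> c \<Longrightarrow> u ! k = v ! k"
  shows "layer_pot l A B a (Suc t) v - layer_pot l A B a t u
    = (if t < l then A + (int (v ! c) - int (a ! c))^2 - (if u ! c = a ! c then 0 else B)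
       else (int (v ! c) - int (a ! c))^2 - (int (u ! c) - int (a ! c))^2)"
proof -
  define g where "g t j k = (if k < min t l then (int (j ! k) - int (a ! k))^2
        else if j ! k = a ! k then 0 else B)" for t j k
  have split: "layer_pot l A B a t j = int (min t l) * A + g t j c + (\<Sum>k\<in>{..<l} - {c}. g t j k)"
    for t j
    using c by (simp add: layer_pot_def g_def sum.remove)
  have "(\<Sum>k\<in>{..<l} - {c}. g t u k) = (\<Sum>k\<in>{..<l} - {c}. g (Suc t) v k)"
  proof (rule sum.cong)
    fix k assume "k \<in> {..<l} - {c}"
    moreover from this have "k < min t l \<longleftrightarrow> k < min (Suc t) l"
      using ct by (cases "t < l") auto
    ultimately show "g t u k = g (Suc t) v k" using eq by (simp add: g_def)
  qed simp
  then show ?thesis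
    unfolding split[of "Suc t"] split[of t] using c ct by (auto simp: g_def algebra_simps)
qed

lemma layer_pot_step:
  assumes c: "c < l" and ct: "t < l \<Longrightarrow> c = t" and eq: "\<And>k. k < l \<Longrightarrow> k \<noteq> c \<Longrightarrow> u ! k = v ! k"
    and s: "u ! c < s" "v ! c < s" "a ! c < s"
    and SB: "(int s - 1)^2 \<le> B" and BK: "B + K \<le> 2 * A" and SK: "(int s - 1)^2 + K \<le> A"
    and K_nonneg: "0 \<le> K"
  shows "layer_pot l A B a (Suc t) v - layer_pot l A B a t u \<le> A + (int (u ! c) - int (v ! c))^2"
    and "layer_pot l A B a t u - layer_pot l A B a (Suc t) v \<le> A + (int (u ! c) - int (v ! c))^2 - K"
proof -
  let ?D = "layer_pot l A B a (Suc t) v - layer_pot l A B a t u"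
  have D: "?D = (if t < l then A + (int (v ! c) - int (a ! c))^2 - (if u ! c = a ! c then 0 else B)
       else (int (v ! c) - int (a ! c))^2 - (int (u ! c) - int (a ! c))^2)"
    by (rule layer_pot_Suc_diff[OF c ct eq])
  have sq: "(int (v ! c) - int (a ! c))^2 \<le> (int s - 1)^2" "(int (u ! c) - int (a ! c))^2 \<le> (int s - 1)^2"
    using diff_square_le s by auto
  have nonneg: "0 \<le> (int (u ! c) - int (v ! c))^2" "0 \<le> (int (v ! c) - int (a ! c))^2"
    "0 \<le> (int (u ! c) - int (a ! c))^2" "0 \<le> (int s - 1)^2"
    by simp_all
  have "?D \<le> A + (int (u ! c) - int (v ! c))^2 \<and> - ?D \<le> A + (int (u ! c) - int (v ! c))^2 - K"
  proof (cases "t < l \<and> u ! c = a ! c")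
    case True
    then have "(int (v ! c) - int (a ! c))^2 = (int (u ! c) - int (v ! c))^2"
      by (simp add: power2_commute)
    with True D have "?D = A + (int (u ! c) - int (v ! c))^2" by simp
    with nonneg SB BK show ?thesis by linarith
  next
    case False
    then consider "t < l" "u ! c \<noteq> a ! c" | "\<not> t < l" by blast
    then show ?thesis
    proof cases
      case 1
      with D have "?D = A + (int (v ! c) - int (a ! c))^2 - B" by simp
      with sq nonneg SB BK show ?thesis by linarith
    next
      case 2
      with D have "?D = (int (v ! c) - int (a ! c))^2 - (int (u ! c) - int (a ! c))^2" by simp
      with sq nonneg SK K_nonneg show ?thesis by linarith
    qed
  qed
  then show "?D \<le> A + (int (u ! c) - int (v ! c))^2"
    and "layer_pot l A B a t u - layer_pot l A B a (Suc t) v \<le> A + (int (u ! c) - int (v ! c))^2 - K"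
    by simp_all
qed

definition before_mid :: "nat \<Rightarrow> vtx \<Rightarrow> bool" where
  "before_mid l v = (case v of Main i _ \<Rightarrow> i < l | Tin i _ _ \<Rightarrow> i \<le> l
     | Tout i _ _ \<Rightarrow> i < l | Mid i _ _ _ \<Rightarrow> i < l)"

lemma Gedge_leaving_before_mid:
  assumes "Gedge b l fin fout u v" "before_mid l u" "\<not> before_mid l v"
  shows "\<exists>j. v = Main l j \<and> vecok l (2 ^ b) j"
  using assms unfolding Gedge_def dedge_def
  by (auto simp: before_mid_def pnode_def split: if_splits)

lemma walk_meets_mid_layer:
  assumes w: "walk (Gedge b l fin fout) xs" and "hd xs = Main 0 x" "last xs = Main (2 * l) z"
    and "0 < l"
  shows "\<exists>p j. p < length xs \<and> xs ! p = Main l j \<and> vecok l (2 ^ b) j"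
proof -
  obtain k where k: "Suc k < length xs" "before_mid l (xs ! k)" "\<not> before_mid l (xs ! Suc k)"
    using walk_exits[OF w, of "before_mid l"] assms by (auto simp: before_mid_def)
  then have "Gedge b l fin fout (xs ! k) (xs ! Suc k)" using w by (simp add: walk_def)
  with k show ?thesis using Gedge_leaving_before_mid by blast
qed

locale Gbl_ends = Gbl +
  fixes x z :: "nat list"
  assumes x_ok: "vecok l (2 ^ b) x" and z_ok: "vecok l (2 ^ b) z"
    and parity: "\<forall>k<l. even (int (z ! k) - int (x ! k))"
begin

definition pot_x :: "nat \<Rightarrow> nat list \<Rightarrow> int" where
  "pot_x i j = layer_pot l A (int ((2 ^ b)^2)) x i j"

definition pot_z :: "nat \<Rightarrow> nat list \<Rightarrow> int" where
  "pot_z i j = - layer_pot l A (int ((2 ^ b)^2)) z (2 * l - i) j"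

lemma pot_x_admissible:
  assumes H: "Hadj b l i j j'"
  shows "pot_x (Suc i) j' - pot_x i j \<le> int (Hwt b l i j j')
    \<and> pot_x i j - pot_x (Suc i) j' \<le> int (Hwt b l i j j') - 4 * int b - 4"
proof -
  note H' = HadjD[OF H]
  have "i < l \<Longrightarrow> cidx l i - 1 = i" by (simp add: cidx_def)
  from layer_pot_step[OF H'(4) this H'(5) vecok_nth[OF H'(2,4)] vecok_nth[OF H'(3,4)]
      vecok_nth[OF x_ok H'(4)] pot_constants]
  show ?thesis by (simp add: pot_x_def Hwt_eq)
qed

lemma pot_z_admissible:
  assumes H: "Hadj b l i j j'"
  shows "pot_z (Suc i) j' - pot_z i j \<le> int (Hwt b l i j j')
    \<and> pot_z i j - pot_z (Suc i) j' \<le> int (Hwt b l i j j') - 4 * int b - 4"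
proof -
  note H' = HadjD[OF H]
  define t where "t = 2 * l - Suc i"
  have t: "2 * l - i = Suc t" "2 * l - Suc i = t" using H'(1) by (auto simp: t_def)
  have "t < l \<Longrightarrow> cidx l i - 1 = t" using H'(1) by (auto simp: t_def cidx_def)
  from layer_pot_step[OF H'(4) this H'(5)[symmetric] vecok_nth[OF H'(3,4)] vecok_nth[OF H'(2,4)]
      vecok_nth[OF z_ok H'(4)] pot_constants]
  show ?thesis by (simp add: pot_z_def Hwt_eq t power2_commute)
qed

lemma vtx_pot_x_lipschitz: "G u v \<Longrightarrow> \<bar>vtx_pot b l pot_x u - vtx_pot b l pot_x v\<bar> \<le> 1"
  by (rule vtx_pot_lipschitz[OF pot_x_admissible])

lemma vtx_pot_z_lipschitz: "G u v \<Longrightarrow> \<bar>vtx_pot b l pot_z u - vtx_pot b l pot_z v\<bar> \<le> 1"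
  by (rule vtx_pot_lipschitz[OF pot_z_admissible])

lemma vtx_pot_values:
  "vtx_pot b l pot_x (Main 0 x) = 0"
  "vtx_pot b l pot_x (Main l j) = int l * A + (\<Sum>k<l. (int (j ! k) - int (x ! k))^2)"
  "vtx_pot b l pot_z (Main (2 * l) z) = 0"
  "vtx_pot b l pot_z (Main l j) = - (int l * A + (\<Sum>k<l. (int (j ! k) - int (z ! k))^2))"
  by (simp_all add: vtx_pot_def pot_x_def pot_z_def layer_pot_def mult_2)

lemma walk_through_mid_length:
  assumes w: "walk G xs" "hd xs = Main 0 x" "last xs = Main (2 * l) z"
    and p: "p < length xs" "xs ! p = Main l j"
  shows "2 * int l * A + (\<Sum>k<l. (int (j ! k) - int (x ! k))^2) + (\<Sum>k<l. (int (j ! k) - int (z ! k))^2)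
    \<le> int (length xs - 1)"
proof -
  define q where "q = length xs - 1"
  have q: "p \<le> q" "q < length xs" and ne: "xs \<noteq> []" using p by (auto simp: q_def)
  have ends: "xs ! 0 = Main 0 x" "xs ! q = Main (2 * l) z"
    using w ne by (simp_all add: hd_conv_nth last_conv_nth q_def)
  have "\<bar>vtx_pot b l pot_x (xs ! p) - vtx_pot b l pot_x (xs ! 0)\<bar> \<le> int (p - 0)"
    using p by (intro walk_lipschitz[OF w(1) vtx_pot_x_lipschitz]) auto
  moreover have "\<bar>vtx_pot b l pot_z (xs ! q) - vtx_pot b l pot_z (xs ! p)\<bar> \<le> int (q - p)"
    by (rule walk_lipschitz[OF w(1) vtx_pot_z_lipschitz q])
  ultimately show ?thesis
    using q by (simp add: p ends vtx_pot_values of_nat_diff q_def[symmetric])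
qed

definition ymid :: "nat list" where
  "ymid = map (\<lambda>k. (x ! k + z ! k) div 2) [0..<l]"

text \<open>The H-vertices of a shortest path: in layer i < l coordinate i moves from x to the
  midpoint, in layer l + m coordinate l - m - 1 moves from the midpoint to z.\<close>
definition route :: "nat \<Rightarrow> nat list" where
  "route i = map (\<lambda>k. if i \<le> l then (if k < i then ymid ! k else x ! k)
     else (if 2 * l - i \<le> k then z ! k else ymid ! k)) [0..<l]"

definition opt_len :: nat where
  "opt_len = (\<Sum>i<2 * l. Hwt b l i (route i) (route (Suc i)))"

lemma vector_lengths: "length x = l" "length z = l" "length ymid = l" "length (route i) = l"
  using x_ok z_ok by (auto simp: vecok_def ymid_def route_def)

lemma two_ymid:
  assumes "k < l"
  shows "2 * int (ymid ! k) = int (x ! k) + int (z ! k)"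
proof -
  have "even (x ! k + z ! k)" using parity assms by simp
  then have "int (2 * ((x ! k + z ! k) div 2)) = int (x ! k + z ! k)" by simp
  then show ?thesis using assms by (simp add: ymid_def)
qed

lemma ymid_less: "k < l \<Longrightarrow> ymid ! k < 2 ^ b"
  using two_ymid[of k] vecok_nth[OF x_ok, of k] vecok_nth[OF z_ok, of k] by linarith

lemma route_nth: "k < l \<Longrightarrow> route i ! k = (if i \<le> l then (if k < i then ymid ! k else x ! k)
     else (if 2 * l - i \<le> k then z ! k else ymid ! k))"
  by (simp add: route_def)

lemma route_ok: "vecok l (2 ^ b) (route i)"
  using vector_lengths vecok_nth[OF x_ok] vecok_nth[OF z_ok] ymid_less
  by (auto simp: vecok_def route_nth)

lemma route_ends: "route 0 = x" "route l = ymid" "route (2 * l) = z"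
  using l_ge1 by (auto intro!: nth_equalityI simp: vector_lengths route_nth)

lemma Hadj_route: "i < 2 * l \<Longrightarrow> Hadj b l i (route i) (route (Suc i))"
  by (auto simp: Hadj_def route_ok route_nth cidx_def)

lemma Hwt_route_first: "i < l \<Longrightarrow> int (Hwt b l i (route i) (route (Suc i))) = A + (int (x ! i) - int (ymid ! i))^2"
  by (simp add: Hwt_eq cidx_def route_nth)

lemma Hwt_route_second:
  assumes "m < l"
  shows "int (Hwt b l (m + l) (route (m + l)) (route (Suc (m + l))))
    = A + (int (ymid ! (l - Suc m)) - int (z ! (l - Suc m)))^2"
proof -
  have "\<not> l - m \<le> l - Suc m" "l - Suc m < l" "2 * l - Suc (m + l) = l - Suc m" using assms by arith+
  then show ?thesis using assms by (simp add: Hwt_eq cidx_def route_nth)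
qed

lemma path_route:
  assumes "ymid \<notin> R"
  shows "path (G_del R) (Main 0 x) (Main (2 * l) z) opt_len"
proof -
  have "Main i (route i) \<notin> Main l ` R" for i
    using assms route_ends(2) by auto
  then have "path (G_del R) (Main i (route i)) (Main (Suc i) (route (Suc i)))
      (Hwt b l i (route i) (route (Suc i)))" if "i < 2 * l" for i
    using path_Hadj[OF Hadj_route[OF that]] by blast
  from path_sum[of "2 * l" "G_del R" "\<lambda>i. Main i (route i)", OF this] show ?thesis
    by (simp add: opt_len_def route_ends)
qed

lemma opt_len_eq:
  "int opt_len = 2 * int l * A + (\<Sum>k<l. (int (x ! k) - int (ymid ! k))^2)
     + (\<Sum>k<l. (int (ymid ! k) - int (z ! k))^2)"
proof -
  let ?h = "\<lambda>i. int (Hwt b l i (route i) (route (Suc i)))"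
  have "int opt_len = (\<Sum>i<l. ?h i) + (\<Sum>i=l..<l + l. ?h i)"
    by (simp add: opt_len_def mult_2 sum.atLeastLessThan_concat flip: atLeast0LessThan)
  also have "(\<Sum>i=l..<l + l. ?h i) = (\<Sum>m<l. ?h (m + l))"
    using sum.shift_bounds_nat_ivl[of ?h 0 l l] by (simp add: atLeast0LessThan)
  finally have split: "int opt_len = (\<Sum>i<l. ?h i) + (\<Sum>m<l. ?h (m + l))" .
  have "(\<Sum>i<l. ?h i) = int l * A + (\<Sum>k<l. (int (x ! k) - int (ymid ! k))^2)"
    by (simp add: Hwt_route_first sum.distrib)
  moreover have "(\<Sum>m<l. ?h (m + l)) = int l * A + (\<Sum>m<l. (int (ymid ! (l - Suc m)) - int (z ! (l - Suc m)))^2)"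
    by (simp add: Hwt_route_second sum.distrib)
  moreover have "(\<Sum>m<l. (int (ymid ! (l - Suc m)) - int (z ! (l - Suc m)))^2) = (\<Sum>k<l. (int (ymid ! k) - int (z ! k))^2)"
    by (rule sum.nat_diff_reindex)
  ultimately show ?thesis unfolding split by simp
qed

lemma sum_squares_via_ymid:
  "(\<Sum>k<l. (int (j ! k) - int (x ! k))^2) + (\<Sum>k<l. (int (j ! k) - int (z ! k))^2)
    = (\<Sum>k<l. (int (x ! k) - int (ymid ! k))^2) + (\<Sum>k<l. (int (ymid ! k) - int (z ! k))^2)
      + 2 * (\<Sum>k<l. (int (j ! k) - int (ymid ! k))^2)"
proof -
  have "(\<Sum>k<l. (int (j ! k) - int (x ! k))^2 + (int (j ! k) - int (z ! k))^2)
    = (\<Sum>k<l. (int (x ! k) - int (ymid ! k))^2 + (int (ymid ! k) - int (z ! k))^2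
        + 2 * (int (j ! k) - int (ymid ! k))^2)"
    by (intro sum.cong refl square_dist_midpoint two_ymid) simp
  then show ?thesis by (simp add: sum.distrib sum_distrib_left)
qed

lemma walk_through_mid_length_ge:
  assumes w: "walk G xs" "hd xs = Main 0 x" "last xs = Main (2 * l) z"
    and p: "p < length xs" "xs ! p = Main l j" and j: "length j = l"
  shows "opt_len + (if j = ymid then 0 else 2) \<le> length xs - 1"
proof -
  let ?e = "\<Sum>k<l. (int (j ! k) - int (ymid ! k))^2"
  have "j \<noteq> ymid \<Longrightarrow> 1 \<le> ?e"
  proof -
    assume "j \<noteq> ymid"
    then obtain k where k: "k < l" "j ! k \<noteq> ymid ! k"
      using j vector_lengths(3) nth_equalityI by metis
    then have "0 < (int (j ! k) - int (ymid ! k))^2" by simp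
    also have "\<dots> \<le> ?e" by (rule member_le_sum) (use k in auto)
    finally show ?thesis by linarith
  qed
  moreover have "0 \<le> ?e" by (simp add: sum_nonneg)
  ultimately have "int (opt_len + (if j = ymid then 0 else 2)) \<le> int (length xs - 1)"
    using walk_through_mid_length[OF w p] sum_squares_via_ymid[of j] opt_len_eq by auto
  then show ?thesis by (simp only: of_nat_le_iff)
qed

lemma walk_G_del_length_ge:
  assumes w: "walk (G_del R) xs" and ends: "hd xs = Main 0 x" "last xs = Main (2 * l) z"
  shows "opt_len + (if ymid \<in> R then 2 else 0) \<le> length xs - 1"
proof -
  have wG: "walk G xs" using w by (rule walk_mono) (simp add: Gdel_def)
  then obtain p j where p: "p < length xs" "xs ! p = Main l j" and j: "vecok l (2 ^ b) j"
    using walk_meets_mid_layer[OF _ ends] l_ge1 by fastforce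
  have "length xs \<noteq> 1"
    using ends l_ge1 by (cases xs) auto
  moreover have "length xs \<noteq> 0" using w by (simp add: walk_def)
  ultimately have "2 \<le> length xs" by linarith
  then have "j \<notin> R"
    using walk_vertex_on_edge[OF w _ p(1)] p(2) by (auto simp: Gdel_def)
  moreover have "length j = l" using j by (simp add: vecok_def)
  ultimately show ?thesis
    using walk_through_mid_length_ge[OF wG ends p]
    by (cases "ymid \<in> R") (auto split: if_splits)
qed

lemma gdist_G_del_eq:
  assumes "ymid \<notin> R"
  shows "gdist (G_del R) (Main 0 x) (Main (2 * l) z) = enat opt_len"
proof (rule antisym)
  show "gdist (G_del R) (Main 0 x) (Main (2 * l) z) \<le> enat opt_len"
    by (rule gdist_le_path[OF path_route[OF assms]])
  show "enat opt_len \<le> gdist (G_del R) (Main 0 x) (Main (2 * l) z)"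
    using walk_G_del_length_ge by (intro le_gdistI) fastforce
qed

lemma gdist_G_del_gt:
  assumes "ymid \<in> R"
  shows "enat opt_len < gdist (G_del R) (Main 0 x) (Main (2 * l) z)"
proof -
  have "enat (opt_len + 2) \<le> gdist (G_del R) (Main 0 x) (Main (2 * l) z)"
    using walk_G_del_length_ge assms by (intro le_gdistI) fastforce
  moreover have "enat opt_len < enat (opt_len + 2)" by simp
  ultimately show ?thesis by (metis order_less_le_trans)
qed

end

theorem mainTheorem7:
  fixes b l :: nat and fin fout :: "nat \<Rightarrow> nat list \<Rightarrow> nat \<Rightarrow> bool list"
    and R :: "nat list set" and x z :: "nat list"
  assumes "b \<ge> 1" and "l \<ge> 1"
    and "\<And>i j. 0 < i \<Longrightarrow> i \<le> 2 * l \<Longrightarrow> vecok l (2 ^ b) j \<Longrightarrow>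
           bij_betw (fin i j) {..<2 ^ b} {t. length t = b}"
    and "\<And>i j. i < 2 * l \<Longrightarrow> vecok l (2 ^ b) j \<Longrightarrow>
           bij_betw (fout i j) {..<2 ^ b} {t. length t = b}"
    and "R \<subseteq> {j. vecok l (2 ^ b) j}"
    and "vecok l (2 ^ b) x" and "vecok l (2 ^ b) z"
    and "\<forall>k<l. even (int (z ! k) - int (x ! k))"
  shows "map (\<lambda>k. (x ! k + z ! k) div 2) [0..<l] \<notin> R \<longleftrightarrow>
         gdist (Gdel b l fin fout R) (Main 0 x) (Main (2 * l) z)
           = gdist (Gedge b l fin fout) (Main 0 x) (Main (2 * l) z)"
proof -
  interpret Gbl_ends b l fin fout x z
    using assms by unfold_locales auto
  have "gdist G (Main 0 x) (Main (2 * l) z) = enat opt_len"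
    using gdist_G_del_eq[of "{}"] by (simp add: Gdel_empty)
  then show ?thesis
    using gdist_G_del_eq[of R] gdist_G_del_gt[of R] unfolding ymid_def by auto
qed

end
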